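(* Let $\mathcal{A},\mathcal{B}\subseteq\mathcal{S}$ be finite sets of permutations and let $$A=\{\vec v\in[0,1]^{\mathcal A}\mid\exists(\sigma^m)\in\mathcal{S}^{\mathbb N}:|\sigma^m|\to\infty,\ (\widetilde{\mathrm{c\text{-}occ}}(\pi,\sigma^m))_{\pi\in\mathcal A}\to\vec v\},$$ $$B=\{\vec v\in[0,1]^{\mathcal B}\mid\exists(\sigma^m)\in\mathcal{S}^{\mathbb N}:|\sigma^m|\to\infty,\ (\widetilde{\mathrm{occ}}(\pi,\sigma^m))_{\pi\in\mathcal B}\to\vec v\},$$ $$C=\{\vec v\in[0,1]^{\mathcal A\sqcup\mathcal B}\mid\exists(\sigma^m)\in\mathcal{S}^{\mathbb N}:|\sigma^m|\to\infty,\ (\widetilde{\mathrm{c\text{-}occ}}(\pi,\sigma^m))_{\pi\in\mathcal A}\to\vec v_{\mathcal A},\ (\widetilde{\mathrm{occ}}(\pi,\sigma^m))_{\pi\in\mathcal B}\to\vec v_{\mathcal B}\}.$$ Then $A\times B=C$. More precisely, if $\vec v_A\in A$, $\vec v_B\in B$ and $(\sigma^m_A)_m$, $(\sigma^m_B)_m$ are sequences of permutations with $|\sigma^m_A|\to\infty$, $(\widetilde{\mathrm{c\text{-}occ}}(\pi,\sigma^m_A))_{\pi\in\mathcal A}\to\vec v_A$, $|\sigma^m_B|\to\infty$, $(\widetilde{\mathrm{occ}}(\pi,\sigma^m_B))_{\pi\in\mathcal B}\to\vec v_B$, then the sequence $\sigma^m_C:=\sigma^m_B[\sigma^m_A,\dots,\sigma^m_A]$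 satisfies $|\sigma^m_C|\to\infty$, $(\widetilde{\mathrm{c\text{-}occ}}(\pi,\sigma^m_C))_{\pi\in\mathcal A}\to\vec v_A$ and $(\widetilde{\mathrm{occ}}(\pi,\sigma^m_C))_{\pi\in\mathcal B}\to\vec v_B$.
   Context: $\mathcal{S}_n$ is the set of permutations of $[n]$, $\mathcal{S}$ the set of all finite permutations. For $\sigma\in\mathcal{S}_n$ and $I\subseteq[n]$, $\mathrm{pat}_I(\sigma)$ is the unique permutation of $[|I|]$ order-isomorphic to $(\sigma(i))_{i\in I}$. For $\pi\in\mathcal{S}_k$ and $\sigma\in\mathcal{S}_n$ ($n\ge k$): $\mathrm{occ}(\pi,\sigma)$ is the number of subsets $I\subseteq[n]$ with $\mathrm{pat}_I(\sigma)=\pi$ and $\widetilde{\mathrm{occ}}(\pi,\sigma)=\mathrm{occ}(\pi,\sigma)/\binom nk$; $\mathrm{c\text{-}occ}(\pi,\sigma)$ is the number of intervals $I\subseteq[n]$ with $\mathrm{pat}_I(\sigma)=\pi$ and $\widetilde{\mathrm{c\text{-}occ}}(\pi,\sigma)=\mathrm{c\text{-}occ}(\pi,\sigma)/n$ (these are taken to be $0$ when $n<k$). For $\theta\in\mathcal{S}_d$ and permutations $\nu^{(1)},\dots,\nu^{(d)}$, the substitution $\theta[\nu^{(1)},\dots,\nu^{(d)}]$ is the permutation of size $\sum_i|\nu^{(i)}|$ obtained by replacing, in the diagram of $\theta$ (points $(i,\theta(i))$), each point $(i,\theta(i))$ by the diagram of $\nu^{(i)}$ and rescaling rows and columns; i.e.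 its entries split into consecutive blocks of sizes $|\nu^{(1)}|,\dots,|\nu^{(d)}|$, the $i$-th block is order-isomorphic to $\nu^{(i)}$, and every entry of block $i$ is smaller than every entry of block $j$ iff $\theta(i)<\theta(j)$. *)

theory Defs
  imports "HOL-Analysis.Analysis" "HOL-Library.FuncSet"
begin

text \<open>A permutation of [n] is represented 0-based as a list of length n which is an
  arrangement of 0,...,n-1: entry i (0-based position) is the value sigma(i+1)-1.\<close>
definition is_perm :: "nat list \<Rightarrow> bool" where
  "is_perm xs \<longleftrightarrow> distinct xs \<and> set xs = {0..<length xs}"

definition std :: "nat list \<Rightarrow> nat list" where
  "std xs = map (\<lambda>x. card {y \<in> set xs. y < x}) xs"

definition pat :: "nat set \<Rightarrow> nat list \<Rightarrow> nat list" where
  "pat I \<sigma> = std (nths \<sigma> I)"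

definition occ :: "nat list \<Rightarrow> nat list \<Rightarrow> nat" where
  "occ \<pi> \<sigma> = card {I. I \<subseteq> {..<length \<sigma>} \<and> pat I \<sigma> = \<pi>}"

definition occ_t :: "nat list \<Rightarrow> nat list \<Rightarrow> real" where
  "occ_t \<pi> \<sigma> = (if length \<sigma> < length \<pi> then 0
      else real (occ \<pi> \<sigma>) / real (length \<sigma> choose length \<pi>))"

definition cocc :: "nat list \<Rightarrow> nat list \<Rightarrow> nat" where
  "cocc \<pi> \<sigma> = card {I. (\<exists>i j. I = {i..<j}) \<and> I \<subseteq> {..<length \<sigma>} \<and> pat I \<sigma> = \<pi>}"

definition cocc_t :: "nat list \<Rightarrow> nat list \<Rightarrow> real" where
  "cocc_t \<pi> \<sigma> = (if length \<sigma> < length \<pi> then 0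
      else real (cocc \<pi> \<sigma>) / real (length \<sigma>))"

text \<open>Substitution theta[nu_1,...,nu_d]: block i is nu_i shifted by the total size of the
  blocks j with theta(j) < theta(i).\<close>
definition subst :: "nat list \<Rightarrow> nat list list \<Rightarrow> nat list" where
  "subst \<theta> \<nu>s = concat (map (\<lambda>i. map (\<lambda>x. x + sum_list [length (\<nu>s ! j). j \<leftarrow> [0..<length \<theta>], \<theta> ! j < \<theta> ! i]) (\<nu>s ! i)) [0..<length \<theta>])"

text \<open>Limit sets. Vectors in [0,1]^X are extensional functions X \<rightarrow> [0,1];
  [0,1]^(A \<squnion> B) is identified with [0,1]^A \<times> [0,1]^B.\<close>
definition limA :: "nat list set \<Rightarrow> (nat list \<Rightarrow> real) set" where
  "limA \<A> = {v \<in> \<A> \<rightarrow>\<^sub>E {0..1}. \<exists>s::nat \<Rightarrow> nat list. (\<forall>m. is_perm (s m)) \<and>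
      filterlim (\<lambda>m. length (s m)) at_top sequentially \<and>
      (\<forall>\<pi>\<in>\<A>. (\<lambda>m. cocc_t \<pi> (s m)) \<longlonglongrightarrow> v \<pi>)}"

definition limB :: "nat list set \<Rightarrow> (nat list \<Rightarrow> real) set" where
  "limB \<B> = {v \<in> \<B> \<rightarrow>\<^sub>E {0..1}. \<exists>s::nat \<Rightarrow> nat list. (\<forall>m. is_perm (s m)) \<and>
      filterlim (\<lambda>m. length (s m)) at_top sequentially \<and>
      (\<forall>\<pi>\<in>\<B>. (\<lambda>m. occ_t \<pi> (s m)) \<longlonglongrightarrow> v \<pi>)}"

definition limC :: "nat list set \<Rightarrow> nat list set \<Rightarrow> ((nat list \<Rightarrow> real) \<times> (nat list \<Rightarrow> real)) set" where
  "limC \<A> \<B> = {(vA, vB). vA \<in> \<A> \<rightarrow>\<^sub>E {0..1} \<and> vB \<in> \<B> \<rightarrow>\<^sub>E {0..1} \<and>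
      (\<exists>s::nat \<Rightarrow> nat list. (\<forall>m. is_perm (s m)) \<and>
      filterlim (\<lambda>m. length (s m)) at_top sequentially \<and>
      (\<forall>\<pi>\<in>\<A>. (\<lambda>m. cocc_t \<pi> (s m)) \<longlonglongrightarrow> vA \<pi>) \<and>
      (\<forall>\<pi>\<in>\<B>. (\<lambda>m. occ_t \<pi> (s m)) \<longlonglongrightarrow> vB \<pi>))}"

end

theory Submission
  imports Defs
begin

text \<open>Write \<open>p = |\<sigma>\<^sub>A|\<close>, \<open>q = |\<sigma>\<^sub>B|\<close> and \<open>k = |\<pi>|\<close>. The inflation \<open>\<sigma>\<^sub>C = \<sigma>\<^sub>B[\<sigma>\<^sub>A, \<dots>, \<sigma>\<^sub>A]\<close>
  consists of \<open>q\<close> blocks, each a shifted copy of \<open>\<sigma>\<^sub>A\<close>. A window of length \<open>k\<close> of \<open>\<sigma>\<^sub>C\<close> inside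
  one block is a window of \<open>\<sigma>\<^sub>A\<close>, and only \<open>k\<close> windows per block leave it, so the consecutive
  pattern densities of \<open>\<sigma>\<^sub>C\<close> and \<open>\<sigma>\<^sub>A\<close> differ by \<open>O(k/p)\<close>. A \<open>k\<close>-set of positions of \<open>\<sigma>\<^sub>C\<close>
  meeting \<open>k\<close> distinct blocks has the pattern of its set of blocks in \<open>\<sigma>\<^sub>B\<close>; these transversal
  sets make up a proportion at least \<open>(1 - k/q)\<^sup>k\<close> of all \<open>k\<close>-sets, so the pattern densities of
  \<open>\<sigma>\<^sub>C\<close> and \<open>\<sigma>\<^sub>B\<close> differ by at most \<open>1 - (1 - k/q)\<^sup>k\<close>. Both errors vanish as \<open>p, q \<rightarrow> \<infinity>\<close>.\<close>

section \<open>Patterns and permutations\<close>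

lemma nths_eq_map_nth_filter:
  "nths xs I = map ((!) xs) (filter (\<lambda>i. i \<in> I) [0..<length xs])"
proof -
  have "zip xs [0..<length xs] = map (\<lambda>i. (xs ! i, i)) [0..<length xs]"
    by (rule nth_equalityI) auto
  then show ?thesis
    unfolding nths_def by (simp add: filter_map comp_def)
qed

lemma std_map_eq_if_same_order:
  assumes "inj_on u (set L)" "inj_on v (set L)"
    and "\<And>x y. x \<in> set L \<Longrightarrow> y \<in> set L \<Longrightarrow> u x < u y \<longleftrightarrow> v x < v y"
  shows "std (map u L) = std (map v L)"
proof -
  have "card {y \<in> u ` set L. y < u i} = card {y \<in> v ` set L. y < v i}" if "i \<in> set L" for i
  proof -
    have "{y \<in> u ` set L. y < u i} = u ` {j \<in> set L. u j < u i}"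
      and "{y \<in> v ` set L. y < v i} = v ` {j \<in> set L. v j < v i}"
      by auto
    moreover have "{j \<in> set L. u j < u i} = {j \<in> set L. v j < v i}"
      using assms(3) that by auto
    ultimately show ?thesis
      using card_image[OF inj_on_subset[OF assms(1)]] card_image[OF inj_on_subset[OF assms(2)]]
      by (metis (no_types, lifting) mem_Collect_eq subsetI)
  qed
  then show ?thesis
    unfolding std_def by (auto intro!: map_cong)
qed

lemma pat_eq_if_order_iso:
  assumes "distinct xs" "distinct ys" "I \<subseteq> {..<length xs}" "J \<subseteq> {..<length ys}"
    and "h ` I = J" "\<And>i i'. i \<in> I \<Longrightarrow> i' \<in> I \<Longrightarrow> i < i' \<Longrightarrow> h i < h i'"
    and "\<And>i i'. i \<in> I \<Longrightarrow> i' \<in> I \<Longrightarrow> xs ! i < xs ! i' \<longleftrightarrow> ys ! h i < ys ! h i'"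
  shows "pat I xs = pat J ys"
proof -
  define L where "L = filter (\<lambda>i. i \<in> I) [0..<length xs]"
  have set_L: "set L = I"
    using assms(3) unfolding L_def by auto
  have "strict_mono_on I h"
    using assms(6) by (auto intro: strict_mono_onI)
  then have inj_h: "inj_on h I"
    by (rule strict_mono_on_imp_inj_on)
  have "filter (\<lambda>i. i \<in> J) [0..<length ys] = map h L"
  proof (rule sorted_distinct_set_unique)
    have "sorted_wrt (<) (filter (\<lambda>i. i \<in> J) [0..<length ys])"
      by (rule sorted_wrt_filter) simp
    then show "sorted (filter (\<lambda>i. i \<in> J) [0..<length ys])"
      "distinct (filter (\<lambda>i. i \<in> J) [0..<length ys])"
      using strict_sorted_iff by auto
    have "sorted_wrt (<) L"
      unfolding L_def by (rule sorted_wrt_filter) simp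
    then have "sorted_wrt (<) (map h L)"
      unfolding sorted_wrt_map by (rule sorted_wrt_mono_rel[rotated]) (use set_L assms(6) in auto)
    then show "sorted (map h L)" "distinct (map h L)"
      using strict_sorted_iff by auto
    show "set (filter (\<lambda>i. i \<in> J) [0..<length ys]) = set (map h L)"
      using assms(4,5) set_L by auto
  qed
  then have "nths ys J = map (\<lambda>i. ys ! h i) L"
    by (simp add: nths_eq_map_nth_filter)
  moreover have "nths xs I = map ((!) xs) L"
    by (simp add: nths_eq_map_nth_filter L_def)
  moreover have "std (map ((!) xs) L) = std (map (\<lambda>i. ys ! h i) L)"
  proof (rule std_map_eq_if_same_order)
    show "inj_on ((!) xs) (set L)"
      using set_L assms(1,3) by (auto intro!: inj_on_nth)
    have "inj_on ((!) ys) J"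
      using assms(2,4) by (auto intro!: inj_on_nth)
    then show "inj_on (\<lambda>i. ys ! h i) (set L)"
      using comp_inj_on[OF inj_h] assms(5) set_L by (simp add: comp_def)
  qed (use assms(7) set_L in auto)
  ultimately show ?thesis
    unfolding pat_def by simp
qed

lemma length_pat: "I \<subseteq> {..<length \<sigma>} \<Longrightarrow> length (pat I \<sigma>) = card I"
proof -
  assume "I \<subseteq> {..<length \<sigma>}"
  then have "{i. i < length \<sigma> \<and> i \<in> I} = I"
    by auto
  then show ?thesis
    unfolding pat_def std_def by (simp add: length_nths)
qed

lemma is_perm_nth_less: "is_perm b \<Longrightarrow> i < length b \<Longrightarrow> b ! i < length b"
  unfolding is_perm_def by (metis atLeastLessThan_iff nth_mem)

lemma is_perm_card_smaller_entries:
  assumes "is_perm b" "i < length b"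
  shows "card {j. j < length b \<and> b ! j < b ! i} = b ! i"
proof -
  have "bij_betw ((!) b) {j. j < length b \<and> b ! j < b ! i} {..<b ! i}"
  proof (rule bij_betw_imageI)
    show "inj_on ((!) b) {j. j < length b \<and> b ! j < b ! i}"
      using assms(1) unfolding is_perm_def by (auto intro!: inj_on_nth)
    have "v \<in> (!) b ` {j. j < length b \<and> b ! j < b ! i}" if "v < b ! i" for v
    proof -
      have "v \<in> set b"
        using that is_perm_nth_less[OF assms] assms(1) unfolding is_perm_def by auto
      then show ?thesis
        using that by (auto simp: in_set_conv_nth)
    qed
    then show "(!) b ` {j. j < length b \<and> b ! j < b ! i} = {..<b ! i}"
      by auto
  qed
  then show ?thesis
    by (simp add: bij_betw_same_card)
qed

lemma concat_map_if_singleton: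
  "concat (map (\<lambda>j. if P j then [f j] else []) xs) = map f (filter P xs)"
  by (induction xs) auto

lemma length_concat_map_blocks:
  "length (concat (map (\<lambda>i. map (g i) a) [0..<q])) = q * length a"
  by (induction q) auto

lemma nth_concat_map_blocks:
  "k < q * length a \<Longrightarrow>
    concat (map (\<lambda>i. map (g i) a) [0..<q]) ! k = g (k div length a) (a ! (k mod length a))"
proof (induction q)
  case (Suc q)
  show ?case
  proof (cases "k < q * length a")
    case True
    then show ?thesis
      using Suc.IH by (simp add: nth_append length_concat_map_blocks)
  next
    case False
    then have "k div length a = q"
      using Suc.prems by (intro div_nat_eqI) (auto simp: mult.commute)
    moreover have "k mod length a = k - q * length a"
      using calculation by (metis minus_div_mult_eq_mod)
    ultimately show ?thesis
      using False Suc.prems by (simp add: nth_append length_concat_map_blocks)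
  qed
qed simp

text \<open>Block \<open>i\<close> is shifted by \<open>|a|\<close> times the number of entries of \<open>b\<close> below \<open>b ! i\<close>,
  which is \<open>b ! i\<close> since \<open>b\<close> is a permutation.\<close>
lemma subst_replicate:
  assumes "is_perm b"
  shows "subst b (replicate (length b) a)
    = concat (map (\<lambda>i. map (\<lambda>x. x + length a * b ! i) a) [0..<length b])"
proof -
  have "sum_list [length (replicate (length b) a ! j). j \<leftarrow> [0..<length b], b ! j < b ! i]
      = length a * b ! i" if i: "i < length b" for i
  proof -
    have "[length (replicate (length b) a ! j). j \<leftarrow> [0..<length b], b ! j < b ! i]
        = map (\<lambda>j. length a) (filter (\<lambda>j. b ! j < b ! i) [0..<length b])"
      unfolding concat_map_if_singleton by simp
    moreover have "length (filter (\<lambda>j. b ! j < b ! i) [0..<length b]) = b ! i"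
      using is_perm_card_smaller_entries[OF assms i]
      by (simp add: distinct_length_filter Int_def conj_commute)
    ultimately show ?thesis
      by (simp add: sum_list_triv)
  qed
  then show ?thesis
    unfolding subst_def by (auto intro!: arg_cong[where f = concat] map_cong)
qed

section \<open>Inflations\<close>

text \<open>\<open>c\<close> is the inflation \<open>b[a, \<dots>, a]\<close>, described entrywise: position \<open>k\<close> of \<open>c\<close> lies in
  block \<open>k div |a|\<close> at offset \<open>k mod |a|\<close>.\<close>
locale inflation =
  fixes a b c :: "nat list"
  assumes is_perm_a: "is_perm a" and is_perm_b: "is_perm b"
    and length_c: "length c = length a * length b"
    and nth_c: "\<And>k. k < length c \<Longrightarrow> c ! k = a ! (k mod length a) + length a * b ! (k div length a)"

lemma inflation_subst_replicate:
  assumes "is_perm a" "is_perm b"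
  shows "inflation a b (subst b (replicate (length b) a))"
proof
  show "length (subst b (replicate (length b) a)) = length a * length b"
    unfolding subst_replicate[OF assms(2)] length_concat_map_blocks by simp
  fix k
  assume "k < length (subst b (replicate (length b) a))"
  then have "k < length b * length a"
    unfolding subst_replicate[OF assms(2)] length_concat_map_blocks .
  then show "subst b (replicate (length b) a) ! k
      = a ! (k mod length a) + length a * b ! (k div length a)"
    unfolding subst_replicate[OF assms(2)] by (simp add: nth_concat_map_blocks)
qed (use assms in auto)

context inflation
begin

abbreviation block :: "nat \<Rightarrow> nat" where
  "block k \<equiv> k div length a"

abbreviation block_positions :: "nat \<Rightarrow> nat set" where
  "block_positions j \<equiv> {j * length a..<j * length a + length a}"

lemma block_less: "k < length c \<Longrightarrow> block k < length b"
  using length_c by (simp add: less_mult_imp_div_less mult.commute)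

lemma nth_c_mod_div:
  assumes "k < length c"
  shows "c ! k mod length a = a ! (k mod length a)" "c ! k div length a = b ! block k"
proof -
  have "0 < length a"
    using assms length_c by (cases "length a") auto
  moreover from this have "a ! (k mod length a) < length a"
    using is_perm_nth_less[OF is_perm_a] by simp
  ultimately show "c ! k mod length a = a ! (k mod length a)" "c ! k div length a = b ! block k"
    using nth_c[OF assms] by simp_all
qed

lemma is_perm_c: "is_perm c"
proof -
  have "distinct c"
  proof (subst distinct_conv_nth, intro allI impI)
    fix i j
    assume ij: "i < length c" "j < length c" "i \<noteq> j"
    then have "0 < length a"
      using length_c by (cases "length a") auto
    show "c ! i \<noteq> c ! j"
    proof
      assume "c ! i = c ! j"
      then have "a ! (i mod length a) = a ! (j mod length a)" "b ! block i = b ! block j"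
        using nth_c_mod_div[OF ij(1)] nth_c_mod_div[OF ij(2)] by metis+
      then have "i mod length a = j mod length a" "block i = block j"
        using is_perm_a is_perm_b \<open>0 < length a\<close> block_less ij(1,2)
        unfolding is_perm_def by (simp_all add: nth_eq_iff_index_eq)
      then show False
        using ij(3) by (metis div_mult_mod_eq)
    qed
  qed
  moreover have "set c \<subseteq> {0..<length c}"
  proof
    fix x
    assume "x \<in> set c"
    then obtain k where k: "k < length c" "x = c ! k"
      by (auto simp: in_set_conv_nth)
    have "x < length a + length a * b ! block k"
      using k nth_c is_perm_nth_less[OF is_perm_a] length_c by (cases "length a") auto
    also have "\<dots> = length a * (b ! block k + 1)"
      by simp
    also have "\<dots> \<le> length a * length b"
      using is_perm_nth_less[OF is_perm_b block_less[OF k(1)]] by (intro mult_le_mono2) simp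
    finally show "x \<in> {0..<length c}"
      using length_c by simp
  qed
  ultimately have "set c = {0..<length c}"
    by (simp add: card_subset_eq distinct_card)
  with \<open>distinct c\<close> show ?thesis
    unfolding is_perm_def by simp
qed

end

section \<open>Consecutive occurrences\<close>

definition cocc_starts :: "nat list \<Rightarrow> nat list \<Rightarrow> nat set" where
  "cocc_starts \<pi> \<sigma> = {i. i + length \<pi> \<le> length \<sigma> \<and> pat {i..<i + length \<pi>} \<sigma> = \<pi>}"

lemma cocc_eq_card_cocc_starts:
  assumes "1 \<le> length \<pi>"
  shows "cocc \<pi> \<sigma> = card (cocc_starts \<pi> \<sigma>)"
proof -
  have "{I. (\<exists>i j. I = {i..<j}) \<and> I \<subseteq> {..<length \<sigma>} \<and> pat I \<sigma> = \<pi>}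
      = (\<lambda>i. {i..<i + length \<pi>}) ` cocc_starts \<pi> \<sigma>"
  proof (intro equalityI subsetI)
    fix I
    assume "I \<in> {I. (\<exists>i j. I = {i..<j}) \<and> I \<subseteq> {..<length \<sigma>} \<and> pat I \<sigma> = \<pi>}"
    then obtain i j where I: "I = {i..<j}" "I \<subseteq> {..<length \<sigma>}" "pat I \<sigma> = \<pi>"
      by auto
    then have "j = i + length \<pi>"
      using length_pat[OF I(2)] assms by simp
    moreover have "i + length \<pi> - 1 \<in> I"
      using I(1) assms calculation by auto
    ultimately show "I \<in> (\<lambda>i. {i..<i + length \<pi>}) ` cocc_starts \<pi> \<sigma>"
      using I unfolding cocc_starts_def by force
  qed (auto simp: cocc_starts_def)
  moreover have "inj_on (\<lambda>i. {i..<i + length \<pi>}) (cocc_starts \<pi> \<sigma>)"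
  proof (rule inj_onI)
    fix x y
    assume "{x..<x + length \<pi>} = {y..<y + length \<pi>}"
    moreover have "x \<in> {x..<x + length \<pi>}" "y \<in> {y..<y + length \<pi>}"
      using assms by auto
    ultimately show "x = y"
      by (metis atLeastLessThan_iff le_antisym)
  qed
  ultimately show ?thesis
    unfolding cocc_def by (simp add: card_image)
qed

lemma cocc_Nil: "cocc [] \<sigma> = 1"
proof -
  have "{I. (\<exists>i j. I = {i..<j}) \<and> I \<subseteq> {..<length \<sigma>} \<and> pat I \<sigma> = []} = {{}}"
  proof (intro equalityI subsetI)
    fix I
    assume "I \<in> {I. (\<exists>i j. I = {i..<j}) \<and> I \<subseteq> {..<length \<sigma>} \<and> pat I \<sigma> = []}"
    then have I: "I \<subseteq> {..<length \<sigma>}" "pat I \<sigma> = []"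
      by auto
    then have "card I = 0"
      using length_pat[OF I(1)] by simp
    moreover have "finite I"
      using I(1) finite_subset by blast
    ultimately show "I \<in> {{}}"
      by simp
  next
    have "pat {} \<sigma> = []" "{} = {0..<(0::nat)}"
      by (simp_all add: pat_def std_def)
    then show "I \<in> {I. (\<exists>i j. I = {i..<j}) \<and> I \<subseteq> {..<length \<sigma>} \<and> pat I \<sigma> = []}"
      if "I \<in> {{}}" for I
      using that by blast
  qed
  then show ?thesis
    unfolding cocc_def by simp
qed

lemma card_less_mult_mod:
  assumes "0 < p"
  shows "card {i. i < p * q \<and> P (i mod p)} = q * card {r. r < p \<and> P r}"
proof -
  have "bij_betw (\<lambda>(t, r). t * p + r) ({..<q} \<times> {r. r < p \<and> P r}) {i. i < p * q \<and> P (i mod p)}"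
  proof (rule bij_betwI[where g = "\<lambda>i. (i div p, i mod p)"])
    have "t * p + r < p * q" if "t < q" "r < p" for t r
    proof -
      have "t * p + r < (t + 1) * p"
        using that by simp
      also have "\<dots> \<le> q * p"
        using that by (intro mult_le_mono1) simp
      finally show ?thesis
        by (simp add: mult.commute)
    qed
    then show "(\<lambda>(t, r). t * p + r) \<in> {..<q} \<times> {r. r < p \<and> P r} \<rightarrow> {i. i < p * q \<and> P (i mod p)}"
      by auto
    show "(\<lambda>i. (i div p, i mod p)) \<in> {i. i < p * q \<and> P (i mod p)} \<rightarrow> {..<q} \<times> {r. r < p \<and> P r}"
      using assms by (auto simp: less_mult_imp_div_less mult.commute)
  qed auto
  from bij_betw_same_card[OF this] show ?thesis
    by (simp add: card_cartesian_product)
qed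

lemma card_less_mult_mod_near_end:
  assumes "0 < p"
  shows "card {i. i < p * q \<and> p < i mod p + k} \<le> q * k"
proof -
  have "{r. r < p \<and> p < r + k} \<subseteq> {p - k..<p}"
    by auto
  then have "card {r. r < p \<and> p < r + k} \<le> card {p - k..<p}"
    by (intro card_mono) auto
  also have "\<dots> \<le> k"
    by simp
  finally show ?thesis
    using card_less_mult_mod[of p q "\<lambda>r. p < r + k"] assms by simp
qed

context inflation
begin

lemma pat_window_in_block:
  assumes i: "i < length c" and k: "i mod length a + k \<le> length a"
  shows "i + k \<le> length c" "pat {i..<i + k} c = pat {i mod length a..<i mod length a + k} a"
proof -
  define r where "r = i mod length a"
  define t where "t = block i"
  have i_eq: "i = r + t * length a"
    unfolding r_def t_def by simp
  have "i + k \<le> (t + 1) * length a"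
    using k i_eq unfolding r_def by simp
  also have "\<dots> \<le> length b * length a"
    using block_less[OF i] unfolding t_def by (intro mult_le_mono1) simp
  finally show ik: "i + k \<le> length c"
    using length_c by (simp add: mult.commute)
  have "pat {r..<r + k} a = pat {i..<i + k} c"
  proof (rule pat_eq_if_order_iso[where h = "\<lambda>x. x + t * length a"])
    show "distinct a" "distinct c"
      using is_perm_a is_perm_c unfolding is_perm_def by auto
    show "{r..<r + k} \<subseteq> {..<length a}" "{i..<i + k} \<subseteq> {..<length c}"
      using k ik unfolding r_def by auto
    show "(\<lambda>x. x + t * length a) ` {r..<r + k} = {i..<i + k}"
      using i_eq by (simp add: add_ac)
    have "c ! (x + t * length a) = a ! x + length a * b ! t" if "x \<in> {r..<r + k}" for x
    proof -
      have "x < length a" "x + t * length a < length c"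
        using that k ik i_eq unfolding r_def by auto
      moreover from this have "block (x + t * length a) = t"
        by (intro div_nat_eqI) (auto simp: mult.commute)
      ultimately show ?thesis
        using nth_c by simp
    qed
    then show "a ! x < a ! y \<longleftrightarrow> c ! (x + t * length a) < c ! (y + t * length a)"
      if "x \<in> {r..<r + k}" "y \<in> {r..<r + k}" for x y
      using that by simp
  qed simp
  then show "pat {i..<i + k} c = pat {i mod length a..<i mod length a + k} a"
    unfolding r_def by simp
qed

lemma cocc_starts_c_between:
  assumes "1 \<le> length \<pi>"
  shows "{i. i < length c \<and> i mod length a \<in> cocc_starts \<pi> a} \<subseteq> cocc_starts \<pi> c"
    and "cocc_starts \<pi> c \<subseteq> {i. i < length c \<and> i mod length a \<in> cocc_starts \<pi> a}
      \<union> {i. i < length c \<and> length a < i mod length a + length \<pi>}"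
proof -
  show "{i. i < length c \<and> i mod length a \<in> cocc_starts \<pi> a} \<subseteq> cocc_starts \<pi> c"
    using pat_window_in_block unfolding cocc_starts_def by auto
  show "cocc_starts \<pi> c \<subseteq> {i. i < length c \<and> i mod length a \<in> cocc_starts \<pi> a}
      \<union> {i. i < length c \<and> length a < i mod length a + length \<pi>}"
  proof
    fix i
    assume i: "i \<in> cocc_starts \<pi> c"
    then have "i < length c"
      using assms unfolding cocc_starts_def by auto
    then show "i \<in> {i. i < length c \<and> i mod length a \<in> cocc_starts \<pi> a}
        \<union> {i. i < length c \<and> length a < i mod length a + length \<pi>}"
      using i pat_window_in_block[of i "length \<pi>"] unfolding cocc_starts_def by auto
  qed
qed

text \<open>Every window of \<open>a\<close> occurs once in each of the \<open>|b|\<close> blocks; the only other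
  windows of \<open>c\<close> are the at most \<open>|\<pi>|\<close> per block that cross into the next block.\<close>
lemma cocc_bounds:
  assumes "1 \<le> length \<pi>" and "0 < length a"
  shows "length b * cocc \<pi> a \<le> cocc \<pi> c"
    and "cocc \<pi> c \<le> length b * cocc \<pi> a + length b * length \<pi>"
proof -
  let ?Inside = "{i. i < length c \<and> i mod length a \<in> cocc_starts \<pi> a}"
  let ?Crossing = "{i. i < length c \<and> length a < i mod length a + length \<pi>}"
  have "cocc_starts \<pi> a = {r. r < length a \<and> r \<in> cocc_starts \<pi> a}"
    using assms(1) unfolding cocc_starts_def by auto
  then have card_Inside: "card ?Inside = length b * cocc \<pi> a"
    using card_less_mult_mod[OF assms(2), of "length b" "\<lambda>r. r \<in> cocc_starts \<pi> a"]
      cocc_eq_card_cocc_starts[OF assms(1)] length_c by simp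
  have card_Crossing: "card ?Crossing \<le> length b * length \<pi>"
    using card_less_mult_mod_near_end[OF assms(2)] length_c by simp
  have "finite (cocc_starts \<pi> c)"
    unfolding cocc_starts_def by (rule finite_subset[of _ "{..length c}"]) auto
  then have "card ?Inside \<le> card (cocc_starts \<pi> c)"
    using cocc_starts_c_between(1)[OF assms(1)] by (rule card_mono)
  moreover have "card (cocc_starts \<pi> c) \<le> card (?Inside \<union> ?Crossing)"
    using cocc_starts_c_between(2)[OF assms(1)] by (intro card_mono) simp_all
  ultimately show "length b * cocc \<pi> a \<le> cocc \<pi> c"
    and "cocc \<pi> c \<le> length b * cocc \<pi> a + length b * length \<pi>"
    using card_Inside card_Crossing card_Un_le[of ?Inside ?Crossing]
      cocc_eq_card_cocc_starts[OF assms(1)] by simp_all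
qed

text \<open>The summand \<open>1\<close> covers \<open>\<pi> = []\<close>, which has exactly one consecutive occurrence.\<close>
lemma cocc_t_close:
  assumes "length \<pi> \<le> length a" "0 < length a" "0 < length b"
  shows "\<bar>cocc_t \<pi> c - cocc_t \<pi> a\<bar> \<le> (real (length \<pi>) + 1) / real (length a)"
proof (cases "\<pi> = []")
  case True
  then have "cocc_t \<pi> c = 1 / (real (length a) * real (length b))" "cocc_t \<pi> a = 1 / real (length a)"
    by (simp_all add: cocc_t_def cocc_Nil length_c)
  moreover have "1 / (real (length a) * real (length b)) \<le> 1 / real (length a)"
    using assms by (simp add: divide_simps Suc_le_eq)
  ultimately show ?thesis
    using True by simp
next
  case False
  define p where "p = real (length a)"
  define q where "q = real (length b)"
  define k where "k = real (length \<pi>)"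
  have "length \<pi> \<ge> 1"
    using False by (simp add: Suc_le_eq)
  then have "real (length b * cocc \<pi> a) \<le> real (cocc \<pi> c)"
    "real (cocc \<pi> c) \<le> real (length b * cocc \<pi> a + length b * length \<pi>)"
    using cocc_bounds[of \<pi>] assms(2) by (simp_all only: of_nat_le_iff)
  then have bounds: "q * cocc \<pi> a \<le> cocc \<pi> c" "cocc \<pi> c \<le> q * cocc \<pi> a + q * k"
    unfolding q_def k_def by simp_all
  have pos: "0 < p" "0 < q"
    using assms unfolding p_def q_def by simp_all
  have "length \<pi> \<le> length c"
    using assms length_c by (metis One_nat_def Suc_leI le_trans mult_le_mono2 mult_1_right)
  then have "cocc_t \<pi> c - cocc_t \<pi> a = (cocc \<pi> c - q * cocc \<pi> a) / (p * q)"
    using assms pos unfolding cocc_t_def length_c p_def q_def by (simp add: divide_simps)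
  moreover have "(cocc \<pi> c - q * cocc \<pi> a) / (p * q) \<le> (q * k) / (p * q)"
    using bounds pos by (intro divide_right_mono) simp_all
  moreover have "(q * k) / (p * q) = k / p"
    using pos by simp
  moreover have "0 \<le> (cocc \<pi> c - q * cocc \<pi> a) / (p * q)"
    using bounds unfolding p_def q_def by simp
  ultimately have "\<bar>cocc_t \<pi> c - cocc_t \<pi> a\<bar> \<le> k / p"
    by simp
  also have "\<dots> \<le> (k + 1) / p"
    using pos by (simp add: divide_right_mono)
  finally show ?thesis
    unfolding p_def k_def .
qed

end

section \<open>Occurrences\<close>

lemma occ_eq_card_subsets:
  "occ \<pi> \<sigma> = card {I. I \<subseteq> {..<length \<sigma>} \<and> card I = length \<pi> \<and> pat I \<sigma> = \<pi>}"
proof -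
  have "{I. I \<subseteq> {..<length \<sigma>} \<and> pat I \<sigma> = \<pi>}
      = {I. I \<subseteq> {..<length \<sigma>} \<and> card I = length \<pi> \<and> pat I \<sigma> = \<pi>}"
    using length_pat by auto
  then show ?thesis
    unfolding occ_def by simp
qed

lemma occ_le_choose: "occ \<pi> \<sigma> \<le> length \<sigma> choose length \<pi>"
proof -
  have "occ \<pi> \<sigma> \<le> card {I. I \<subseteq> {..<length \<sigma>} \<and> card I = length \<pi>}"
    unfolding occ_eq_card_subsets by (rule card_mono[OF finite_subset[of _ "Pow {..<length \<sigma>}"]]) auto
  then show ?thesis
    using n_subsets[of "{..<length \<sigma>}" "length \<pi>"] by simp
qed

lemma choose_times_power_ge:
  fixes p q k :: nat
  assumes "k \<le> q" "1 \<le> p"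
  shows "((real q - real k) / real q) ^ k * real (p * q choose k) \<le> real (q choose k) * real p ^ k"
proof (cases "q = 0")
  case False
  have "k \<le> p * q"
    using assms by (metis le_trans mult_le_mono1 mult_1)
  then have binomial_pq: "real (p * q choose k) = (\<Prod>i = 0..<k. real (p * q - i) / real (k - i))"
    by (simp add: binomial_altdef_of_nat)
  have "((real q - real k) / real q) ^ k * real (p * q choose k)
      = (\<Prod>i = 0..<k. (real q - real k) / real q * (real (p * q - i) / real (k - i)))"
    unfolding binomial_pq prod.distrib by simp
  also have "\<dots> \<le> (\<Prod>i = 0..<k. real (q - i) / real (k - i) * real p)"
  proof (rule prod_mono)
    fix i
    assume "i \<in> {0..<k}"
    then have i: "i < k"
      by simp
    have "(real q - real k) * real (p * q - i) \<le> real (q - i) * (real p * real q)"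
      using i assms by (intro mult_mono) (auto simp flip: of_nat_mult)
    then have "(real q - real k) * real (p * q - i) / (real q * real (k - i))
        \<le> real (q - i) * (real p * real q) / (real q * real (k - i))"
      by (rule divide_right_mono) simp
    then have "(real q - real k) / real q * (real (p * q - i) / real (k - i))
        \<le> real (q - i) / real (k - i) * real p"
      using False by (simp add: field_simps)
    moreover have "0 \<le> (real q - real k) / real q * (real (p * q - i) / real (k - i))"
      using assms by simp
    ultimately show "0 \<le> (real q - real k) / real q * (real (p * q - i) / real (k - i)) \<and>
        (real q - real k) / real q * (real (p * q - i) / real (k - i)) \<le> real (q - i) / real (k - i) * real p"
      by simp
  qed
  also have "\<dots> = real (q choose k) * real p ^ k"
    unfolding binomial_altdef_of_nat[OF assms(1)] prod.distrib by simp
  finally show ?thesis .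
qed (use assms in simp)

lemma abs_diff_le_if_sandwiched:
  fixes x y \<rho> :: real
  assumes "0 \<le> x" "x \<le> 1" "\<rho> \<le> 1" "x * \<rho> \<le> y" "y \<le> x * \<rho> + (1 - \<rho>)"
  shows "\<bar>y - x\<bar> \<le> 1 - \<rho>"
proof -
  have "0 \<le> x * (1 - \<rho>)" "x * (1 - \<rho>) \<le> 1 - \<rho>"
    using assms(1-3) by (simp_all add: mult_left_le_one_le)
  then show ?thesis
    using assms(4,5) by (simp add: algebra_simps abs_le_iff)
qed

context inflation
begin

lemma choice_transversal:
  assumes p: "0 < length a" and J: "J \<subseteq> {..<length b}" and f: "f \<in> PiE J block_positions"
  shows "f ` J \<subseteq> {..<length c}" "\<And>j. j \<in> J \<Longrightarrow> block (f j) = j"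
    and "inj_on block (f ` J)" "block ` f ` J = J" "card (f ` J) = card J"
proof -
  have fj: "f j \<in> block_positions j" if "j \<in> J" for j
    using f that by auto
  show block_f: "block (f j) = j" if "j \<in> J" for j
  proof (rule div_nat_eqI)
    show "length a * j \<le> f j" "f j < length a * Suc j"
      using fj[OF that] by (auto simp: mult.commute)
  qed
  show "f ` J \<subseteq> {..<length c}"
  proof
    fix x
    assume "x \<in> f ` J"
    then obtain j where j: "j \<in> J" "x = f j"
      by auto
    have "x < (j + 1) * length a"
      using fj[OF j(1)] j by auto
    also have "\<dots> \<le> length b * length a"
      using J j by (intro mult_le_mono1) auto
    finally show "x \<in> {..<length c}"
      using length_c by (simp add: mult.commute)
  qed
  show "inj_on block (f ` J)"
    by (rule inj_onI) (use block_f in auto)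
  show "block ` f ` J = J"
    using block_f by (simp add: image_image)
  have "inj_on f J"
    by (rule inj_onI) (metis block_f)
  then show "card (f ` J) = card J"
    by (rule card_image)
qed

lemma card_choice_transversals:
  assumes p: "0 < length a" and J: "J \<subseteq> {..<length b}"
  shows "card ((\<lambda>f. f ` J) ` PiE J block_positions) = length a ^ card J"
proof -
  have "inj_on (\<lambda>f. f ` J) (PiE J block_positions)"
  proof (rule inj_onI)
    fix f g
    assume f: "f \<in> PiE J block_positions" and g: "g \<in> PiE J block_positions" and fg: "f ` J = g ` J"
    show "f = g"
    proof (rule PiE_ext[OF f g])
      fix j
      assume j: "j \<in> J"
      then obtain j' where j': "j' \<in> J" "f j = g j'"
        using fg by (metis imageE imageI)
      then have "j = j'"
        using choice_transversal(2)[OF p J f j] choice_transversal(2)[OF p J g j'(1)] by simp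
      then show "f j = g j"
        using j' by simp
    qed
  qed
  then have "card ((\<lambda>f. f ` J) ` PiE J block_positions) = card (PiE J block_positions)"
    by (rule card_image)
  also have "\<dots> = length a ^ card J"
    using finite_subset[OF J] by (simp add: card_PiE)
  finally show ?thesis .
qed

lemma transversals_eq_UN_choices:
  assumes p: "0 < length a"
  shows "{I. I \<subseteq> {..<length c} \<and> card I = k \<and> inj_on block I \<and> P (block ` I)}
    = (\<Union>J \<in> {J. J \<subseteq> {..<length b} \<and> card J = k \<and> P J}. (\<lambda>f. f ` J) ` PiE J block_positions)"
proof (intro equalityI subsetI)
  fix I
  assume "I \<in> {I. I \<subseteq> {..<length c} \<and> card I = k \<and> inj_on block I \<and> P (block ` I)}"
  then have I: "I \<subseteq> {..<length c}" "card I = k" "inj_on block I" "P (block ` I)"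
    by auto
  define J where "J = block ` I"
  define f where "f = restrict (the_inv_into I block) J"
  have "J \<subseteq> {..<length b}"
    using I(1) block_less unfolding J_def by auto
  moreover have "card J = k"
    using I(2) card_image[OF I(3)] unfolding J_def by simp
  moreover have "f \<in> PiE J block_positions"
  proof
    fix j
    assume j: "j \<in> J"
    have "f j = the_inv_into I block j"
      unfolding f_def using j by simp
    moreover have "the_inv_into I block j \<in> I" "block (the_inv_into I block j) = j"
      using the_inv_into_into[OF I(3), of j I] f_the_inv_into_f[OF I(3), of j] j
      unfolding J_def by simp_all
    ultimately have "f j \<in> I" "block (f j) = j"
      by simp_all
    moreover have "block (f j) * length a + f j mod length a = f j"
      by (rule div_mult_mod_eq)
    moreover have "f j mod length a < length a"
      using p by simp
    ultimately show "f j \<in> block_positions j"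
      by auto
  qed (simp add: f_def)
  moreover have "f ` J = I"
    unfolding f_def J_def using I(3) by simp
  ultimately show "I \<in> (\<Union>J \<in> {J. J \<subseteq> {..<length b} \<and> card J = k \<and> P J}. (\<lambda>f. f ` J) ` PiE J block_positions)"
    using I(4) unfolding J_def by (intro UN_I[of "block ` I"] image_eqI[of _ _ f]) simp_all
next
  fix I
  assume "I \<in> (\<Union>J \<in> {J. J \<subseteq> {..<length b} \<and> card J = k \<and> P J}. (\<lambda>f. f ` J) ` PiE J block_positions)"
  then obtain J f where J: "J \<subseteq> {..<length b}" "card J = k" "P J"
    and f: "f \<in> PiE J block_positions" and I: "I = f ` J"
    by blast
  show "I \<in> {I. I \<subseteq> {..<length c} \<and> card I = k \<and> inj_on block I \<and> P (block ` I)}"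
    using choice_transversal[OF p J(1) f] J I by simp
qed

lemma card_transversals:
  assumes p: "0 < length a"
  shows "card {I. I \<subseteq> {..<length c} \<and> card I = k \<and> inj_on block I \<and> P (block ` I)}
    = card {J. J \<subseteq> {..<length b} \<and> card J = k \<and> P J} * length a ^ k"
proof -
  let ?JJ = "{J. J \<subseteq> {..<length b} \<and> card J = k \<and> P J}"
  have "finite ?JJ"
    by (rule finite_subset[of _ "Pow {..<length b}"]) auto
  moreover have "finite ((\<lambda>f. f ` J) ` PiE J block_positions)" if "J \<in> ?JJ" for J
    using that finite_subset[of J "{..<length b}"] by (intro finite_imageI finite_PiE) auto
  moreover have "(\<lambda>f. f ` J) ` PiE J block_positions \<inter> (\<lambda>f. f ` J') ` PiE J' block_positions = {}"
    if J: "J \<in> ?JJ" "J' \<in> ?JJ" "J \<noteq> J'" for J J'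
  proof -
    have "f ` J \<noteq> g ` J'" if "f \<in> PiE J block_positions" "g \<in> PiE J' block_positions" for f g
      using choice_transversal(4)[OF p _ that(1)] choice_transversal(4)[OF p _ that(2)] J by auto
    then show ?thesis
      by blast
  qed
  ultimately have "card (\<Union>J \<in> ?JJ. (\<lambda>f. f ` J) ` PiE J block_positions)
      = (\<Sum>J\<in>?JJ. card ((\<lambda>f. f ` J) ` PiE J block_positions))"
    by (intro card_UN_disjoint) auto
  also have "\<dots> = card ?JJ * length a ^ k"
    using card_choice_transversals[OF p] by simp
  finally show ?thesis
    unfolding transversals_eq_UN_choices[OF p] .
qed

lemma pat_transversal:
  assumes p: "0 < length a" and I: "I \<subseteq> {..<length c}" "inj_on block I"
  shows "pat I c = pat (block ` I) b"
proof (rule pat_eq_if_order_iso[where h = block])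
  show "distinct c" "distinct b"
    using is_perm_c is_perm_b unfolding is_perm_def by auto
  show "block ` I \<subseteq> {..<length b}"
    using I(1) block_less by auto
  show "block i < block i'" if "i \<in> I" "i' \<in> I" "i < i'" for i i'
  proof -
    have "block i \<le> block i'"
      using that(3) by (simp add: div_le_mono)
    moreover have "block i \<noteq> block i'"
      using inj_onD[OF I(2) _ that(1,2)] that(3) by auto
    ultimately show ?thesis
      by simp
  qed
  have c_lt_c: "c ! x < c ! y" if "x \<in> I" "y \<in> I" "b ! block x < b ! block y" for x y
  proof -
    have "x < length c" "y < length c"
      using that(1,2) I(1) by auto
    then have "c ! x div length a < c ! y div length a"
      using nth_c_mod_div(2) that(3) by simp
    then show ?thesis
      by (metis div_le_mono not_less)
  qed
  show "c ! i < c ! i' \<longleftrightarrow> b ! block i < b ! block i'" if "i \<in> I" "i' \<in> I" for i i'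
  proof (cases "i = i'")
    case False
    then have "block i \<noteq> block i'"
      using inj_onD[OF I(2) _ that] by auto
    moreover have "block i < length b" "block i' < length b"
      using that I(1) block_less by auto
    ultimately have "b ! block i \<noteq> b ! block i'"
      using is_perm_b unfolding is_perm_def by (simp add: nth_eq_iff_index_eq)
    then consider "b ! block i < b ! block i'" | "b ! block i' < b ! block i"
      by linarith
    then show ?thesis
      using c_lt_c[OF that] c_lt_c[OF that(2,1)] by cases auto
  qed simp
qed (use I in auto)

lemma occurrence_sets_c:
  assumes "0 < length a"
  shows "{I. I \<subseteq> {..<length c} \<and> card I = k \<and> inj_on block I \<and> pat (block ` I) b = \<pi>}
      \<subseteq> {I. I \<subseteq> {..<length c} \<and> card I = k \<and> pat I c = \<pi>}"
    and "{I. I \<subseteq> {..<length c} \<and> card I = k \<and> pat I c = \<pi>}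
      \<subseteq> {I. I \<subseteq> {..<length c} \<and> card I = k \<and> inj_on block I \<and> pat (block ` I) b = \<pi>}
        \<union> {I. I \<subseteq> {..<length c} \<and> card I = k \<and> \<not> inj_on block I}"
  using pat_transversal[OF assms] by auto

text \<open>A \<open>k\<close>-set of positions of \<open>c\<close> meeting \<open>k\<close> distinct blocks has the pattern of its set of
  blocks in \<open>b\<close>; the remaining \<open>k\<close>-sets form the error term.\<close>
lemma occ_bounds:
  assumes "0 < length a"
  shows "occ \<pi> b * length a ^ length \<pi> \<le> occ \<pi> c"
    and "occ \<pi> c \<le> occ \<pi> b * length a ^ length \<pi>
      + ((length c choose length \<pi>) - (length b choose length \<pi>) * length a ^ length \<pi>)"
    and "(length b choose length \<pi>) * length a ^ length \<pi> \<le> length c choose length \<pi>"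
proof -
  define k where "k = length \<pi>"
  let ?Subsets = "{I. I \<subseteq> {..<length c} \<and> card I = k}"
  let ?Transversals = "{I. I \<subseteq> {..<length c} \<and> card I = k \<and> inj_on block I \<and> True}"
  let ?Good = "{I. I \<subseteq> {..<length c} \<and> card I = k \<and> inj_on block I \<and> pat (block ` I) b = \<pi>}"
  let ?Bad = "{I. I \<subseteq> {..<length c} \<and> card I = k \<and> \<not> inj_on block I}"
  let ?Occs = "{I. I \<subseteq> {..<length c} \<and> card I = k \<and> pat I c = \<pi>}"
  have fin: "finite ?Subsets"
    by (rule finite_subset[of _ "Pow {..<length c}"]) auto
  have card_Good: "card ?Good = occ \<pi> b * length a ^ k"
    using card_transversals[OF assms, of k "\<lambda>J. pat J b = \<pi>"] occ_eq_card_subsets[of \<pi> b]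
    unfolding k_def by simp
  have card_Transversals: "card ?Transversals = (length b choose k) * length a ^ k"
    using card_transversals[OF assms, of k "\<lambda>J. True"] n_subsets[of "{..<length b}" k] by simp
  have Transversals_Subsets: "?Transversals \<subseteq> ?Subsets"
    by auto
  then have "card ?Transversals \<le> length c choose k"
    using card_mono[OF fin] n_subsets[of "{..<length c}" k] by simp
  then show "(length b choose length \<pi>) * length a ^ length \<pi> \<le> length c choose length \<pi>"
    using card_Transversals unfolding k_def by simp
  have "?Bad = ?Subsets - ?Transversals"
    by auto
  then have card_Bad: "card ?Bad = (length c choose k) - (length b choose k) * length a ^ k"
    using card_Diff_subset[OF finite_subset[OF Transversals_Subsets fin] Transversals_Subsets]
      n_subsets[of "{..<length c}" k] card_Transversals by simp
  have "finite ?Occs" "finite ?Good" "finite ?Bad"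
    by (rule finite_subset[OF _ fin]; blast)+
  have "card ?Good \<le> card ?Occs"
    using \<open>finite ?Occs\<close> occurrence_sets_c(1)[OF assms] by (rule card_mono)
  moreover have "card ?Occs \<le> card (?Good \<union> ?Bad)"
    using \<open>finite ?Good\<close> \<open>finite ?Bad\<close> occurrence_sets_c(2)[OF assms] by (intro card_mono) simp_all
  ultimately have "card ?Good \<le> card ?Occs" "card ?Occs \<le> card ?Good + card ?Bad"
    using card_Un_le[of ?Good ?Bad] by simp_all
  then show "occ \<pi> b * length a ^ length \<pi> \<le> occ \<pi> c"
    and "occ \<pi> c \<le> occ \<pi> b * length a ^ length \<pi>
      + ((length c choose length \<pi>) - (length b choose length \<pi>) * length a ^ length \<pi>)"
    using card_Good card_Bad occ_eq_card_subsets[of \<pi> c] unfolding k_def by simp_all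
qed

text \<open>\<open>\<rho>\<close> is the proportion of transversal sets among all \<open>|\<pi>|\<close>-subsets of positions.\<close>
lemma occ_t_sandwiched:
  assumes "0 < length a" "length \<pi> \<le> length b"
  defines "\<rho> \<equiv> real ((length b choose length \<pi>) * length a ^ length \<pi>) / real (length c choose length \<pi>)"
  shows "occ_t \<pi> b * \<rho> \<le> occ_t \<pi> c" "occ_t \<pi> c \<le> occ_t \<pi> b * \<rho> + (1 - \<rho>)" "\<rho> \<le> 1"
proof -
  define k where "k = length \<pi>"
  define N where "N = length c choose k"
  define M where "M = (length b choose k) * length a ^ k"
  have bounds: "occ \<pi> b * length a ^ k \<le> occ \<pi> c" "occ \<pi> c \<le> occ \<pi> b * length a ^ k + (N - M)"
    "M \<le> N"
    using occ_bounds[OF assms(1), of \<pi>] unfolding k_def N_def M_def by auto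
  have "k \<le> length c"
    using assms length_c unfolding k_def by (metis One_nat_def Suc_leI le_trans mult_le_mono1 mult_1)
  then have N_pos: "0 < N"
    unfolding N_def by simp
  have "0 < length b choose k"
    using assms(2) unfolding k_def by simp
  then have main_term: "real (occ \<pi> b * length a ^ k) / real N = occ_t \<pi> b * \<rho>"
    using assms(2) unfolding occ_t_def \<rho>_def k_def N_def by simp
  have occ_t_c: "occ_t \<pi> c = real (occ \<pi> c) / real N"
    using \<open>k \<le> length c\<close> unfolding occ_t_def N_def k_def by simp
  have "real (occ \<pi> b * length a ^ k) \<le> real (occ \<pi> c)"
    using bounds(1) by (simp only: of_nat_le_iff)
  then have "real (occ \<pi> b * length a ^ k) / real N \<le> real (occ \<pi> c) / real N"
    by (rule divide_right_mono) simp
  then show "occ_t \<pi> b * \<rho> \<le> occ_t \<pi> c"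
    unfolding occ_t_c main_term .
  have "real (occ \<pi> c) \<le> real (occ \<pi> b * length a ^ k + (N - M))"
    using bounds(2) by (simp only: of_nat_le_iff)
  also have "\<dots> = real (occ \<pi> b * length a ^ k) + (real N - real M)"
    using bounds(3) by (simp add: of_nat_diff)
  finally have "real (occ \<pi> c) / real N
      \<le> (real (occ \<pi> b * length a ^ k) + (real N - real M)) / real N"
    by (rule divide_right_mono) simp
  also have "\<dots> = occ_t \<pi> b * \<rho> + (1 - \<rho>)"
    using N_pos main_term unfolding \<rho>_def M_def N_def k_def by (simp add: field_simps)
  finally show "occ_t \<pi> c \<le> occ_t \<pi> b * \<rho> + (1 - \<rho>)"
    unfolding occ_t_c .
  have "\<rho> = real M / real N"
    unfolding \<rho>_def M_def N_def k_def ..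
  moreover have "real M \<le> real N"
    using bounds(3) by (simp only: of_nat_le_iff)
  ultimately show "\<rho> \<le> 1"
    using N_pos by simp
qed

lemma occ_t_close:
  assumes "0 < length a" "length \<pi> \<le> length b"
  shows "\<bar>occ_t \<pi> c - occ_t \<pi> b\<bar>
    \<le> 1 - ((real (length b) - real (length \<pi>)) / real (length b)) ^ length \<pi>"
proof -
  define \<rho> where "\<rho> = real ((length b choose length \<pi>) * length a ^ length \<pi>)
    / real (length c choose length \<pi>)"
  have "0 \<le> occ_t \<pi> b" "occ_t \<pi> b \<le> 1"
    using occ_le_choose[of \<pi> b] assms(2) unfolding occ_t_def by auto
  then have "\<bar>occ_t \<pi> c - occ_t \<pi> b\<bar> \<le> 1 - \<rho>"
    using occ_t_sandwiched[OF assms] unfolding \<rho>_def by (intro abs_diff_le_if_sandwiched)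
  moreover have "length \<pi> \<le> length c"
    using assms length_c by (metis One_nat_def Suc_leI le_trans mult_le_mono1 mult_1)
  then have "((real (length b) - real (length \<pi>)) / real (length b)) ^ length \<pi> \<le> \<rho>"
    using choose_times_power_ge[of "length \<pi>" "length b" "length a"] assms length_c
    unfolding \<rho>_def by (simp add: pos_le_divide_eq mult.commute)
  ultimately show ?thesis
    by linarith
qed

end

section \<open>Limits\<close>

lemma tendsto_if_eventually_close:
  fixes f g e :: "nat \<Rightarrow> real"
  assumes "f \<longlonglongrightarrow> L" "eventually (\<lambda>m. \<bar>g m - f m\<bar> \<le> e m) sequentially" "e \<longlonglongrightarrow> 0"
  shows "g \<longlonglongrightarrow> L"
proof (rule Lim_transform[OF assms(1)])
  show "(\<lambda>m. g m - f m) \<longlonglongrightarrow> 0"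
    by (rule Lim_null_comparison[OF _ assms(3)]) (use assms(2) in simp)
qed

lemma const_divide_tendsto_0:
  fixes s :: "nat \<Rightarrow> nat"
  assumes "filterlim s at_top sequentially"
  shows "(\<lambda>m. C / real (s m)) \<longlonglongrightarrow> 0"
  using assms
  by (intro tendsto_divide_0[OF tendsto_const] filterlim_at_top_imp_at_infinity
      filterlim_compose[OF filterlim_real_sequentially])

lemma one_minus_ratio_power_tendsto_0:
  fixes s :: "nat \<Rightarrow> nat"
  assumes "filterlim s at_top sequentially"
  shows "(\<lambda>m. 1 - ((real (s m) - real k) / real (s m)) ^ k) \<longlonglongrightarrow> 0"
proof -
  have "eventually (\<lambda>m. 1 \<le> s m) sequentially"
    using assms by (simp add: filterlim_at_top)
  then have "eventually (\<lambda>m. 1 - real k / real (s m) = (real (s m) - real k) / real (s m)) sequentially"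
    by eventually_elim (simp add: field_simps)
  moreover have "(\<lambda>m. 1 - real k / real (s m)) \<longlonglongrightarrow> 1"
    using tendsto_diff[OF tendsto_const const_divide_tendsto_0[OF assms]] by simp
  ultimately have "(\<lambda>m. (real (s m) - real k) / real (s m)) \<longlonglongrightarrow> 1"
    by (rule Lim_transform_eventually[rotated])
  then have "(\<lambda>m. 1 - ((real (s m) - real k) / real (s m)) ^ k) \<longlonglongrightarrow> 1 - 1 ^ k"
    by (intro tendsto_intros)
  then show ?thesis
    by simp
qed

lemma inflation_limits:
  assumes perm_A: "\<And>m. is_perm (sA m)" and perm_B: "\<And>m. is_perm (sB m)"
    and len_A: "filterlim (\<lambda>m. length (sA m)) at_top sequentially"
    and len_B: "filterlim (\<lambda>m. length (sB m)) at_top sequentially"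
  defines "sC \<equiv> \<lambda>m. subst (sB m) (replicate (length (sB m)) (sA m))"
  shows "filterlim (\<lambda>m. length (sC m)) at_top sequentially"
    and "(\<lambda>m. cocc_t \<pi> (sA m)) \<longlonglongrightarrow> v \<Longrightarrow> (\<lambda>m. cocc_t \<pi> (sC m)) \<longlonglongrightarrow> v"
    and "(\<lambda>m. occ_t \<pi> (sB m)) \<longlonglongrightarrow> w \<Longrightarrow> (\<lambda>m. occ_t \<pi> (sC m)) \<longlonglongrightarrow> w"
proof -
  have infl: "inflation (sA m) (sB m) (sC m)" for m
    unfolding sC_def using perm_A perm_B by (rule inflation_subst_replicate)
  have large_A: "eventually (\<lambda>m. K \<le> length (sA m)) sequentially" for K
    using len_A by (simp add: filterlim_at_top)
  have large_B: "eventually (\<lambda>m. K \<le> length (sB m)) sequentially" for K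
    using len_B by (simp add: filterlim_at_top)
  show "filterlim (\<lambda>m. length (sC m)) at_top sequentially"
  proof (rule filterlim_at_top_mono[OF len_B])
    show "eventually (\<lambda>m. length (sB m) \<le> length (sC m)) sequentially"
      using large_A[of 1] by eventually_elim (simp add: inflation.length_c[OF infl])
  qed
  show "(\<lambda>m. cocc_t \<pi> (sC m)) \<longlonglongrightarrow> v" if "(\<lambda>m. cocc_t \<pi> (sA m)) \<longlonglongrightarrow> v"
  proof (rule tendsto_if_eventually_close[OF that _ const_divide_tendsto_0[OF len_A]])
    show "eventually (\<lambda>m. \<bar>cocc_t \<pi> (sC m) - cocc_t \<pi> (sA m)\<bar>
        \<le> (real (length \<pi>) + 1) / real (length (sA m))) sequentially"
      using large_A[of "length \<pi>"] large_A[of 1] large_B[of 1]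
      by eventually_elim (intro inflation.cocc_t_close[OF infl]; simp add: Suc_le_eq)
  qed
  show "(\<lambda>m. occ_t \<pi> (sC m)) \<longlonglongrightarrow> w" if "(\<lambda>m. occ_t \<pi> (sB m)) \<longlonglongrightarrow> w"
  proof (rule tendsto_if_eventually_close[OF that _ one_minus_ratio_power_tendsto_0[OF len_B]])
    show "eventually (\<lambda>m. \<bar>occ_t \<pi> (sC m) - occ_t \<pi> (sB m)\<bar>
        \<le> 1 - ((real (length (sB m)) - real (length \<pi>)) / real (length (sB m))) ^ length \<pi>) sequentially"
      using large_A[of 1] large_B[of "length \<pi>"] large_B[of 1]
      by eventually_elim (intro inflation.occ_t_close[OF infl]; simp add: Suc_le_eq)
  qed
qed

lemma limA_times_limB_eq_limC: "limA \<A> \<times> limB \<B> = limC \<A> \<B>"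
proof (intro equalityI subsetI)
  fix z
  assume "z \<in> limA \<A> \<times> limB \<B>"
  then obtain vA vB sA sB where z: "z = (vA, vB)" "vA \<in> \<A> \<rightarrow>\<^sub>E {0..1}" "vB \<in> \<B> \<rightarrow>\<^sub>E {0..1}"
    and A: "\<forall>m. is_perm (sA m)" "filterlim (\<lambda>m. length (sA m)) at_top sequentially"
      "\<forall>\<pi>\<in>\<A>. (\<lambda>m. cocc_t \<pi> (sA m)) \<longlonglongrightarrow> vA \<pi>"
    and B: "\<forall>m. is_perm (sB m)" "filterlim (\<lambda>m. length (sB m)) at_top sequentially"
      "\<forall>\<pi>\<in>\<B>. (\<lambda>m. occ_t \<pi> (sB m)) \<longlonglongrightarrow> vB \<pi>"
    unfolding limA_def limB_def by blast
  let ?sC = "\<lambda>m. subst (sB m) (replicate (length (sB m)) (sA m))"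
  have "\<forall>m. is_perm (?sC m)"
    using inflation.is_perm_c[OF inflation_subst_replicate] A(1) B(1) by blast
  moreover note inflation_limits[of sA sB, OF _ _ A(2) B(2)]
  ultimately show "z \<in> limC \<A> \<B>"
    unfolding limC_def using z A B by auto
next
  fix z
  assume "z \<in> limC \<A> \<B>"
  then show "z \<in> limA \<A> \<times> limB \<B>"
    unfolding limA_def limB_def limC_def by blast
qed

theorem mainTheorem14:
  fixes \<A> \<B> :: "nat list set"
  assumes "finite \<A>" and "finite \<B>"
    and "\<forall>\<pi>\<in>\<A>. is_perm \<pi>" and "\<forall>\<pi>\<in>\<B>. is_perm \<pi>"
  shows "limA \<A> \<times> limB \<B> = limC \<A> \<B> \<and>
    (\<forall>(sA::nat \<Rightarrow> nat list) (sB::nat \<Rightarrow> nat list) vA vB.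
      vA \<in> limA \<A> \<and> vB \<in> limB \<B> \<and>
      (\<forall>m. is_perm (sA m)) \<and> (\<forall>m. is_perm (sB m)) \<and>
      filterlim (\<lambda>m. length (sA m)) at_top sequentially \<and>
      (\<forall>\<pi>\<in>\<A>. (\<lambda>m. cocc_t \<pi> (sA m)) \<longlonglongrightarrow> vA \<pi>) \<and>
      filterlim (\<lambda>m. length (sB m)) at_top sequentially \<and>
      (\<forall>\<pi>\<in>\<B>. (\<lambda>m. occ_t \<pi> (sB m)) \<longlonglongrightarrow> vB \<pi>)
      \<longrightarrow>
      (let sC = (\<lambda>m. subst (sB m) (replicate (length (sB m)) (sA m))) in
        filterlim (\<lambda>m. length (sC m)) at_top sequentially \<and>
        (\<forall>\<pi>\<in>\<A>. (\<lambda>m. cocc_t \<pi> (sC m)) \<longlonglongrightarrow> vA \<pi>) \<and>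
        (\<forall>\<pi>\<in>\<B>. (\<lambda>m. occ_t \<pi> (sC m)) \<longlonglongrightarrow> vB \<pi>)))"
proof (intro conjI allI impI)
  show "limA \<A> \<times> limB \<B> = limC \<A> \<B>"
    by (rule limA_times_limB_eq_limC)
qed (auto simp: Let_def intro: inflation_limits)

end
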